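(* There is a reference point $(r_1,r_2)$ with $r_1\le -1$ and $r_2\le -1$ such that SEMO with the hypervolume contribution (w.r.t. this reference point) and NMUAR parent selection has a positive probability of stagnating, i.e. of never covering the whole Pareto front, on \textsc{OneMinMax} and on \textsc{LOTZ}.
   Context: Search space $\{0,1\}^n$; objectives maximised. $\textsc{OneMinMax}(x)=(\sum_ix_i,\,n-\sum_ix_i)$ (every point Pareto optimal). $\textsc{LOTZ}(x)=(\mathrm{LO}(x),\mathrm{TZ}(x))$, number of leading ones and trailing zeros; Pareto set $\{1^i0^{n-i}\}$. Dominance: $y$ dominates $x$ if $f_i(y)\ge f_i(x)$ for all $i$, strictly for some $i$; weakly dominates if $\ge$ in all. SEMO with diversity-based parent selection: start with uniform random $s$, $P=\{s\}$. Each iteration: compute the diversity score of each $x\in P$ w.r.t. $P$; choose a parent by the selection mechanism; create $s'$ by flipping one uniformly random bit; if $s'$ is not dominated by any member of $P$, add it and remove all members weakly dominated by $s'$. NMUAR: if the individuals of $P$ do not all have the same score, discard all with minimum score and select uniformly at random among the remaining; otherwise select uniformly at random from $P$. HVC with reference point $(r_1,r_2)$: sort population by increasing $f_1$ as $x_1,\dots,x_\mu$, set $f_1(x_0)=r_1$, $f_2(x_{\mu+1})=r_2$, $\mathrm{HVC}(x_i,P)=(f_1(x_i)-f_1(x_{i-1}))(f_2(x_i)-f_2(x_{i+1}))$. *)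

theory Defs
  imports "HOL-Probability.Probability_Mass_Function"
begin

definition bitstrings :: "nat \<Rightarrow> bool list set" where
  "bitstrings n = {xs. length xs = n}"

definition OneMinMax :: "nat \<Rightarrow> bool list \<Rightarrow> int \<times> int" where
  "OneMinMax n xs = (int (count_list xs True), int n - int (count_list xs True))"

definition LOTZ :: "bool list \<Rightarrow> int \<times> int" where
  "LOTZ xs = (int (length (takeWhile (\<lambda>b. b) xs)), int (length (takeWhile Not (rev xs))))"

definition dominates :: "('a \<Rightarrow> int \<times> int) \<Rightarrow> 'a \<Rightarrow> 'a \<Rightarrow> bool" where
  "dominates f y x \<longleftrightarrow> fst (f y) \<ge> fst (f x) \<and> snd (f y) \<ge> snd (f x)
      \<and> (fst (f y) > fst (f x) \<or> snd (f y) > snd (f x))"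

definition weakly_dominates :: "('a \<Rightarrow> int \<times> int) \<Rightarrow> 'a \<Rightarrow> 'a \<Rightarrow> bool" where
  "weakly_dominates f y x \<longleftrightarrow> fst (f y) \<ge> fst (f x) \<and> snd (f y) \<ge> snd (f x)"

definition pareto_front :: "nat \<Rightarrow> (bool list \<Rightarrow> int \<times> int) \<Rightarrow> (int \<times> int) set" where
  "pareto_front n f = f ` {x \<in> bitstrings n. \<not> (\<exists>y \<in> bitstrings n. dominates f y x)}"

definition covers_front :: "nat \<Rightarrow> (bool list \<Rightarrow> int \<times> int) \<Rightarrow> bool list set \<Rightarrow> bool" where
  "covers_front n f P \<longleftrightarrow> pareto_front n f \<subseteq> f ` P"

text \<open>With the population sorted by increasing f1, the predecessor of x contributes its f1
  value (or r1 if x is first), the successor contributes its f2 value (or r2 if x is last).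
  In SEMO populations objective vectors are pairwise distinct and mutually incomparable,
  so f1 values are distinct and predecessor/successor are well determined.\<close>
definition hvc :: "real \<Rightarrow> real \<Rightarrow> ('a \<Rightarrow> int \<times> int) \<Rightarrow> 'a set \<Rightarrow> 'a \<Rightarrow> real" where
  "hvc r1 r2 f P x =
    (let L = {fst (f y) | y. y \<in> P \<and> fst (f y) < fst (f x)};
         R = {y \<in> P. fst (f y) > fst (f x)};
         left = (if L = {} then r1 else real_of_int (Max L));
         right = (if R = {} then r2
                  else real_of_int (snd (f (SOME y. y \<in> R \<and> fst (f y) = Min ((\<lambda>z. fst (f z)) ` R)))))
     in (real_of_int (fst (f x)) - left) * (real_of_int (snd (f x)) - right))"

definition nmuar_select :: "('a \<Rightarrow> real) \<Rightarrow> 'a set \<Rightarrow> 'a pmf" where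
  "nmuar_select sc P =
    (if (\<forall>x \<in> P. \<forall>y \<in> P. sc x = sc y) then pmf_of_set P
     else pmf_of_set {x \<in> P. sc x \<noteq> Min (sc ` P)})"

definition mutate :: "nat \<Rightarrow> bool list \<Rightarrow> bool list pmf" where
  "mutate n x = map_pmf (\<lambda>i. x[i := \<not> x ! i]) (pmf_of_set {..<n})"

definition semo_update :: "('a \<Rightarrow> int \<times> int) \<Rightarrow> 'a set \<Rightarrow> 'a \<Rightarrow> 'a set" where
  "semo_update f P s' =
    (if \<exists>y \<in> P. dominates f y s' then P
     else insert s' {y \<in> P. \<not> weakly_dominates f s' y})"

definition semo_step :: "nat \<Rightarrow> (bool list \<Rightarrow> int \<times> int) \<Rightarrow> (bool list set \<Rightarrow> bool list \<Rightarrow> real)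
    \<Rightarrow> bool list set \<Rightarrow> bool list set pmf" where
  "semo_step n f score P =
    bind_pmf (nmuar_select (score P) P) (\<lambda>x. map_pmf (semo_update f P) (mutate n x))"

primrec semo_traj :: "nat \<Rightarrow> (bool list \<Rightarrow> int \<times> int) \<Rightarrow> (bool list set \<Rightarrow> bool list \<Rightarrow> real)
    \<Rightarrow> nat \<Rightarrow> bool list set list pmf" where
  "semo_traj n f score 0 = map_pmf (\<lambda>s. [{s}]) (pmf_of_set (bitstrings n))"
| "semo_traj n f score (Suc t) =
    bind_pmf (semo_traj n f score t)
      (\<lambda>tr. map_pmf (\<lambda>Q. tr @ [Q]) (semo_step n f score (last tr)))"

text \<open>Positive probability of never covering the Pareto front: the events
  "not covered during the first t iterations" decrease in t and their intersection is
  "never covered"; by continuity of measure its probability is the infimum over t, so it is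
  positive iff these probabilities are bounded below by some eps > 0.\<close>
definition stagnates_with_positive_prob ::
  "nat \<Rightarrow> (bool list \<Rightarrow> int \<times> int) \<Rightarrow> (bool list set \<Rightarrow> bool list \<Rightarrow> real) \<Rightarrow> bool" where
  "stagnates_with_positive_prob n f score \<longleftrightarrow>
    (\<exists>\<epsilon>::real > 0. \<forall>t.
       measure_pmf.prob (semo_traj n f score t) {tr. \<forall>P \<in> set tr. \<not> covers_front n f P} \<ge> \<epsilon>)"

end

theory Submission imports Defs begin

text \<open>If SEMO starts at the all-zeros string \<open>0\<^sup>n\<close> (probability \<open>2\<^sup>-\<^sup>n\<close>), its population
  remains \<open>{0\<^sup>n}\<close> or \<open>{0\<^sup>n, x}\<close> with \<open>f x = (1, n - 1)\<close> forever: every one-bit mutant of \<open>0\<^sup>n\<close>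
  has this value or is dominated by \<open>0\<^sup>n\<close>, and for a reference point with \<open>r2 - r1 > n - 1\<close> the
  hypervolume contribution of \<open>0\<^sup>n\<close> exceeds that of \<open>x\<close>, so NMUAR always mutates \<open>0\<^sup>n\<close>.
  Such populations never contain a preimage of the Pareto-optimal value \<open>(n, 0)\<close>.\<close>

lemma hvc_pair:
  fixes f :: "'a \<Rightarrow> int \<times> int"
  assumes less: "fst (f z) < fst (f x)"
  shows "hvc r1 r2 f {z, x} z = (real_of_int (fst (f z)) - r1) * real_of_int (snd (f z) - snd (f x))"
    and "hvc r1 r2 f {z, x} x = real_of_int (fst (f x) - fst (f z)) * (real_of_int (snd (f x)) - r2)"
proof -
  have left_z: "{fst (f y) | y. y \<in> {z, x} \<and> fst (f y) < fst (f z)} = {}"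
    and right_z: "{y \<in> {z, x}. fst (f y) > fst (f z)} = {x}"
    and left_x: "{fst (f y) | y. y \<in> {z, x} \<and> fst (f y) < fst (f x)} = {fst (f z)}"
    and right_x: "{y \<in> {z, x}. fst (f y) > fst (f x)} = {}"
    using less by auto
  have "(SOME y. y \<in> {x} \<and> fst (f y) = Min ((\<lambda>z. fst (f z)) ` {x})) = x"
    by (rule some_equality) auto
  then show "hvc r1 r2 f {z, x} z = (real_of_int (fst (f z)) - r1) * real_of_int (snd (f z) - snd (f x))"
    unfolding hvc_def Let_def left_z right_z by simp
  show "hvc r1 r2 f {z, x} x = real_of_int (fst (f x) - fst (f z)) * (real_of_int (snd (f x)) - r2)"
    unfolding hvc_def Let_def left_x right_x by simp
qed

lemma nmuar_select_singleton: "nmuar_select sc {z} = return_pmf z"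
  by (simp add: nmuar_select_def pmf_of_set_singleton)

lemma nmuar_select_pair:
  assumes "sc x < sc z"
  shows "nmuar_select sc {z, x} = return_pmf z"
proof -
  have "Min (sc ` {z, x}) = sc x"
    using assms by simp
  moreover have "{y \<in> {z, x}. sc y \<noteq> sc x} = {z}"
    using assms by auto
  ultimately show ?thesis
    using assms by (auto simp: nmuar_select_def pmf_of_set_singleton)
qed

lemma set_pmf_mutate: "0 < n \<Longrightarrow> set_pmf (mutate n x) = (\<lambda>i. x[i := \<not> x ! i]) ` {..<n}"
  by (simp add: mutate_def lessThan_empty_iff)

lemma finite_bitstrings: "finite (bitstrings n)"
  using finite_lists_length_eq[of "UNIV :: bool set" n] by (simp add: bitstrings_def)

lemma replicate_False_update:
  "i < n \<Longrightarrow> (replicate n False)[i := True] = replicate i False @ True # replicate (n - Suc i) False"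
  by (simp add: upd_conv_take_nth_drop)

lemma count_list_replicate: "count_list (replicate k x) y = (if x = y then k else 0)"
  by (simp add: count_list_eq_length_filter)

lemma semo_traj_invariant:
  assumes step: "\<And>P Q. I P \<Longrightarrow> Q \<in> set_pmf (semo_step n f score P) \<Longrightarrow> I Q"
  shows "measure_pmf.prob (pmf_of_set (bitstrings n)) {s. I {s}}
           \<le> measure_pmf.prob (semo_traj n f score t) {tr. tr \<noteq> [] \<and> (\<forall>P \<in> set tr. I P)}"
proof (induction t)
  case 0
  have "(\<lambda>s. [{s}]) -` {tr. tr \<noteq> [] \<and> (\<forall>P \<in> set tr. I P)} = {s. I {s}}"
    by auto
  then show ?case
    by (simp only: semo_traj.simps measure_map_pmf order_refl)
next
  case (Suc t)
  let ?B = "{tr. tr \<noteq> [] \<and> (\<forall>P \<in> set tr. I P)}"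
  let ?K = "\<lambda>tr. map_pmf (\<lambda>Q. tr @ [Q]) (semo_step n f score (last tr))"
  have kernel: "indicator ?B tr \<le> emeasure (measure_pmf (?K tr)) ?B" for tr
  proof (cases "tr \<in> ?B")
    case True
    have "AE tr' in measure_pmf (?K tr). tr' \<in> ?B"
    proof (rule AE_pmfI)
      fix tr' assume "tr' \<in> set_pmf (?K tr)"
      then obtain Q where Q: "Q \<in> set_pmf (semo_step n f score (last tr))" and tr': "tr' = tr @ [Q]"
        by auto
      have "I Q"
        using True by (intro step[OF _ Q]) auto
      then show "tr' \<in> ?B"
        using True tr' by auto
    qed
    then have "emeasure (measure_pmf (?K tr)) ?B = 1"
      by (intro measure_pmf.emeasure_eq_1_AE) simp_all
    with True show ?thesis
      by simp
  qed simp
  have "emeasure (semo_traj n f score t) ?B = (\<integral>\<^sup>+ tr. indicator ?B tr \<partial>semo_traj n f score t)"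
    by simp
  also have "\<dots> \<le> (\<integral>\<^sup>+ tr. emeasure (measure_pmf (?K tr)) ?B \<partial>semo_traj n f score t)"
    by (rule nn_integral_mono) (rule kernel)
  also have "\<dots> = emeasure (semo_traj n f score (Suc t)) ?B"
    by simp
  finally have "measure_pmf.prob (semo_traj n f score t) ?B \<le> measure_pmf.prob (semo_traj n f score (Suc t)) ?B"
    by (simp add: measure_pmf.emeasure_eq_measure)
  with Suc.IH show ?case
    by linarith
qed

lemma stagnates_if_invariant:
  assumes step: "\<And>P Q. I P \<Longrightarrow> Q \<in> set_pmf (semo_step n f score P) \<Longrightarrow> I Q"
    and uncovered: "\<And>P. I P \<Longrightarrow> \<not> covers_front n f P"
    and start: "s \<in> bitstrings n" "I {s}"
  shows "stagnates_with_positive_prob n f score"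
proof -
  define \<epsilon> where "\<epsilon> = measure_pmf.prob (pmf_of_set (bitstrings n)) {s. I {s}}"
  have "bitstrings n \<noteq> {}"
    using start by blast
  then have "s \<in> set_pmf (pmf_of_set (bitstrings n))"
    using start finite_bitstrings by simp
  then have "0 < measure_pmf.prob (pmf_of_set (bitstrings n)) {s}"
    by (simp add: measure_pmf_single pmf_positive_iff)
  also have "\<dots> \<le> \<epsilon>"
    unfolding \<epsilon>_def using start by (intro measure_pmf.finite_measure_mono) auto
  finally have "0 < \<epsilon>" .
  moreover have "\<epsilon> \<le> measure_pmf.prob (semo_traj n f score t) {tr. \<forall>P \<in> set tr. \<not> covers_front n f P}" for t
  proof -
    have "\<epsilon> \<le> measure_pmf.prob (semo_traj n f score t) {tr. tr \<noteq> [] \<and> (\<forall>P \<in> set tr. I P)}"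
      unfolding \<epsilon>_def using step by (rule semo_traj_invariant)
    also have "\<dots> \<le> measure_pmf.prob (semo_traj n f score t) {tr. \<forall>P \<in> set tr. \<not> covers_front n f P}"
      using uncovered by (intro measure_pmf.finite_measure_mono) auto
    finally show ?thesis .
  qed
  ultimately show ?thesis
    unfolding stagnates_with_positive_prob_def by blast
qed

definition trapped_at_zeros :: "nat \<Rightarrow> (bool list \<Rightarrow> int \<times> int) \<Rightarrow> bool list set \<Rightarrow> bool" where
  "trapped_at_zeros n f P \<longleftrightarrow>
     P = {replicate n False} \<or> (\<exists>x. f x = (1, int n - 1) \<and> P = {replicate n False, x})"

lemma semo_update_trapped_at_zeros:
  assumes trapped: "trapped_at_zeros n f P"
    and zeros: "f (replicate n False) = (0, int n)"
    and y: "f y = (1, int n - 1) \<or> dominates f (replicate n False) y"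
  shows "trapped_at_zeros n f (semo_update f P y)"
  using y
proof
  assume fy: "f y = (1, int n - 1)"
  have "\<not> (\<exists>x \<in> P. dominates f x y)"
    using trapped zeros fy by (auto simp: trapped_at_zeros_def dominates_def)
  moreover have "{x \<in> P. \<not> weakly_dominates f y x} = {replicate n False}"
    using trapped zeros fy by (auto simp: trapped_at_zeros_def weakly_dominates_def)
  ultimately have "semo_update f P y = {replicate n False, y}"
    by (auto simp: semo_update_def)
  with fy show ?thesis
    by (auto simp: trapped_at_zeros_def)
next
  assume "dominates f (replicate n False) y"
  moreover have "replicate n False \<in> P"
    using trapped by (auto simp: trapped_at_zeros_def)
  ultimately have "semo_update f P y = P"
    by (auto simp: semo_update_def)
  with trapped show ?thesis
    by simp
qed

text \<open>In \<open>{0\<^sup>n, x}\<close> the zero string contributes \<open>-r1\<close> and \<open>x\<close> contributes \<open>n - 1 - r2\<close>.\<close>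

lemma nmuar_hvc_select_zeros:
  assumes trapped: "trapped_at_zeros n f P"
    and zeros: "f (replicate n False) = (0, int n)"
    and ref: "real n - 1 < r2 - r1"
  shows "nmuar_select (hvc r1 r2 f P) P = return_pmf (replicate n False)"
  using trapped unfolding trapped_at_zeros_def
proof
  assume "P = {replicate n False}"
  then show ?thesis
    by (simp add: nmuar_select_singleton)
next
  assume "\<exists>x. f x = (1, int n - 1) \<and> P = {replicate n False, x}"
  then obtain x where fx: "f x = (1, int n - 1)" and P: "P = {replicate n False, x}"
    by blast
  have "hvc r1 r2 f P x < hvc r1 r2 f P (replicate n False)"
    using hvc_pair[of f "replicate n False" x r1 r2] zeros fx ref by (simp add: P)
  then show ?thesis
    unfolding P by (rule nmuar_select_pair)
qed

lemma semo_step_trapped_at_zeros: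
  assumes "0 < n"
    and zeros: "f (replicate n False) = (0, int n)"
    and flips: "\<And>i. i < n \<Longrightarrow> f ((replicate n False)[i := True]) = (1, int n - 1)
                  \<or> dominates f (replicate n False) ((replicate n False)[i := True])"
    and ref: "real n - 1 < r2 - r1"
    and trapped: "trapped_at_zeros n f P"
    and Q: "Q \<in> set_pmf (semo_step n f (hvc r1 r2 f) P)"
  shows "trapped_at_zeros n f Q"
proof -
  obtain i where "i < n" and "Q = semo_update f P ((replicate n False)[i := True])"
    using Q \<open>0 < n\<close>
    by (auto simp: semo_step_def nmuar_hvc_select_zeros[OF trapped zeros ref] set_pmf_mutate)
  then show ?thesis
    using semo_update_trapped_at_zeros[OF trapped zeros flips] by simp
qed

lemma trapped_at_zeros_not_covers_front:
  assumes "2 \<le> n"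
    and zeros: "f (replicate n False) = (0, int n)"
    and ones: "(int n, 0) \<in> pareto_front n f"
    and trapped: "trapped_at_zeros n f P"
  shows "\<not> covers_front n f P"
proof
  assume "covers_front n f P"
  with ones have "(int n, 0) \<in> f ` P"
    by (auto simp: covers_front_def)
  with trapped zeros \<open>2 \<le> n\<close> show False
    by (auto simp: trapped_at_zeros_def)
qed

lemma stagnates_from_zeros:
  assumes "2 \<le> n"
    and zeros: "f (replicate n False) = (0, int n)"
    and flips: "\<And>i. i < n \<Longrightarrow> f ((replicate n False)[i := True]) = (1, int n - 1)
                  \<or> dominates f (replicate n False) ((replicate n False)[i := True])"
    and ones: "(int n, 0) \<in> pareto_front n f"
    and ref: "real n - 1 < r2 - r1"
  shows "stagnates_with_positive_prob n f (hvc r1 r2 f)"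
proof (rule stagnates_if_invariant)
  have "0 < n"
    using \<open>2 \<le> n\<close> by simp
  show "trapped_at_zeros n f Q"
    if "trapped_at_zeros n f P" and "Q \<in> set_pmf (semo_step n f (hvc r1 r2 f) P)" for P Q
    using semo_step_trapped_at_zeros[OF \<open>0 < n\<close> zeros flips ref that] .
  show "\<not> covers_front n f P" if "trapped_at_zeros n f P" for P
    using \<open>2 \<le> n\<close> zeros ones that by (rule trapped_at_zeros_not_covers_front)
  show "replicate n False \<in> bitstrings n" "trapped_at_zeros n f {replicate n False}"
    by (simp_all add: bitstrings_def trapped_at_zeros_def)
qed

lemma OneMinMax_zeros: "OneMinMax n (replicate n False) = (0, int n)"
  by (simp add: OneMinMax_def count_list_replicate)

lemma OneMinMax_flip_zeros: "i < n \<Longrightarrow> OneMinMax n ((replicate n False)[i := True]) = (1, int n - 1)"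
  by (simp add: OneMinMax_def replicate_False_update count_list_replicate)

lemma OneMinMax_not_dominates: "\<not> dominates (OneMinMax n) y x"
  by (auto simp: dominates_def OneMinMax_def)

lemma OneMinMax_ones_in_pareto_front: "(int n, 0) \<in> pareto_front n (OneMinMax n)"
proof -
  have ones: "OneMinMax n (replicate n True) = (int n, 0)"
    by (simp add: OneMinMax_def count_list_replicate)
  have "replicate n True \<in> {x \<in> bitstrings n. \<not> (\<exists>y \<in> bitstrings n. dominates (OneMinMax n) y x)}"
    by (simp add: bitstrings_def OneMinMax_not_dominates)
  then show ?thesis
    unfolding pareto_front_def by (rule image_eqI[where f = "OneMinMax n", OF ones[symmetric]])
qed

lemma LOTZ_zeros: "LOTZ (replicate n False) = (0, int n)"
  by (simp add: LOTZ_def)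

lemma LOTZ_flip_zeros:
  assumes "i < n"
  shows "LOTZ ((replicate n False)[i := True]) = (if i = 0 then (1, int n - 1) else (0, int n - int i - 1))"
  using assms by (cases i) (auto simp: LOTZ_def replicate_False_update takeWhile_append)

lemma LOTZ_eq_ones:
  assumes "length y = n" and "int n \<le> fst (LOTZ y)"
  shows "y = replicate n True"
proof -
  have "length (takeWhile (\<lambda>b. b) y) + length (dropWhile (\<lambda>b. b) y) = length y"
    by (metis length_append takeWhile_dropWhile_id)
  moreover have "length y \<le> length (takeWhile (\<lambda>b. b) y)"
    using assms by (simp add: LOTZ_def)
  ultimately have "length (dropWhile (\<lambda>b. b) y) = 0"
    by linarith
  then have "\<forall>b \<in> set y. b"
    by simp
  with assms(1) show ?thesis
    by (auto intro: replicate_eqI)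
qed

lemma LOTZ_ones_in_pareto_front: "(int n, 0) \<in> pareto_front n LOTZ"
proof -
  have ones: "LOTZ (replicate n True) = (int n, 0)"
    by (simp add: LOTZ_def)
  have "\<not> dominates LOTZ y (replicate n True)" if "y \<in> bitstrings n" for y
  proof
    assume dom: "dominates LOTZ y (replicate n True)"
    have "length y = n"
      using that by (simp add: bitstrings_def)
    moreover have "int n \<le> fst (LOTZ y)"
      using dom ones by (simp add: dominates_def)
    ultimately have "y = replicate n True"
      by (rule LOTZ_eq_ones)
    with dom show False
      by (simp add: dominates_def)
  qed
  moreover have "replicate n True \<in> bitstrings n"
    by (simp add: bitstrings_def)
  ultimately have "replicate n True \<in> {x \<in> bitstrings n. \<not> (\<exists>y \<in> bitstrings n. dominates LOTZ y x)}"
    by blast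
  then show ?thesis
    unfolding pareto_front_def by (rule image_eqI[where f = LOTZ, OF ones[symmetric]])
qed

theorem theorem10:
  fixes n :: nat
  assumes "n \<ge> 2"
  shows "\<exists>r1 r2 :: real. r1 \<le> -1 \<and> r2 \<le> -1 \<and>
           stagnates_with_positive_prob n (OneMinMax n) (hvc r1 r2 (OneMinMax n)) \<and>
           stagnates_with_positive_prob n LOTZ (hvc r1 r2 LOTZ)"
proof (intro exI conjI)
  let ?r1 = "- (real n + 1)" and ?r2 = "-1 :: real"
  have ref: "real n - 1 < ?r2 - ?r1"
    by simp
  show "?r1 \<le> -1" "?r2 \<le> -1"
    by simp_all
  show "stagnates_with_positive_prob n (OneMinMax n) (hvc ?r1 ?r2 (OneMinMax n))"
    using OneMinMax_flip_zeros
    by (intro stagnates_from_zeros[OF assms OneMinMax_zeros _ OneMinMax_ones_in_pareto_front ref]) blast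
  show "stagnates_with_positive_prob n LOTZ (hvc ?r1 ?r2 LOTZ)"
  proof (rule stagnates_from_zeros[OF assms LOTZ_zeros _ LOTZ_ones_in_pareto_front ref])
    fix i
    assume "i < n"
    then show "LOTZ ((replicate n False)[i := True]) = (1, int n - 1)
                 \<or> dominates LOTZ (replicate n False) ((replicate n False)[i := True])"
      using LOTZ_flip_zeros[of i n] by (auto simp: dominates_def LOTZ_zeros)
  qed
qed

end
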